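(* Let $Y$ be a sofic shift and let $(G,L_G)$ be a right-resolving and regular labeled graph presenting $Y$. Then there is a labeled-graph homomorphism $\theta : (G,L_G) \to (\mathbb K(Y), L_{\mathbb K(Y)})$ such that the induced sliding block code satisfies $\theta(\mathcal R(L_G)) \subseteq \mathcal R(L_{\mathbb K(Y)})$, and $\theta(V_G)$ is a hereditary subset of $V_{\mathbb K(Y)}$. If furthermore $(G,L_G)$ is follower-separated, then $\theta$ is an isomorphism of labeled graphs from $(G,L_G)$ onto the hereditary labeled subgraph $(\mathbb K(Y)_{\theta(V_G)}, L_{\mathbb K(Y)})$.
   Context: A labeled graph $(G,L_G)$: finite directed graph $G$ (vertices $V_G$, edges $E_G$, source/terminal maps $s_G,t_G$), without sinks or sources, with labeling $L_G:E_G\to A$, $A$ a finite alphabet; $X_G$ is its edge shift; $L_G$ acts coordinatewise on paths; it presents $Y=L_G(X_G)$. $X_G[0,\infty)$ denotes right-infinite paths, $X_G(-\infty,-1]$ left-infinite paths $\cdots e_{-2}e_{-1}$; $s_G$ of a right-infinite path is the source of its first edge, $t_G$ of a left-infinite path is the terminal vertex of its last edge; $Y[0,\infty)=\{y_{[0,\infty)}:y\in Y\}$. Right-resolving: distinct edges with the same source have distinct labels. Follower set of a vertex: $f_G(v)=\{L_G(x):x\in X_G[0,\infty), s_G(x)=v\}$. For $y\in Y$: $F(y)=\{w\in Y[0,\infty): y_{(-\infty,-1]}w\in Y\}$. A vertex $v$ is regular if there is $z\in X_G$ with $t_G(z_{(-\infty,-1]})=v$ and $f_G(v)=F(L_G(z))$;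 the labeled graph is regular if all vertices are regular. Follower-separated: $f_G(v)=f_G(w)$ implies $v=w$. For a sliding block code $\pi:X\to Y$ and $x\in X$ let $\mathbb U(x)=\{z\in X: \exists N\ \forall i\le N,\ z_i=x_i\}$; $x$ is regular for $\pi$ if $\pi$ maps $\mathbb U(x)$ onto $\mathbb U(\pi(x))$; $\mathcal R(\pi)$ is the set of such points. Future cover $(\mathbb K(Y),L_{\mathbb K(Y)})$ of a sofic shift $Y\subseteq A^{\mathbb Z}$: vertices are the distinct sets $F(y)$, $y\in Y$ (finitely many); there is an edge labeled $a\in A$ from $F(y)$ to $F(z)$ exactly when $F(z)=\{w\in A^{\mathbb N}: aw\in F(y)\}$ (one such edge for each such pair and label). A labeled-graph homomorphism is a graph homomorphism (vertices to vertices, edges to edges, compatible with sources and terminals) preserving labels; it induces a sliding block code between the edge shifts. A set $U$ of vertices is hereditary if $s(e)\in U$ implies $t(e)\in U$ for every edge $e$; the hereditary labeled subgraph on $U$ has vertex set $U$ and all edges with source in $U$, with the restricted labeling. *)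

theory Defs
  imports Main
begin

definition labeled_graph :: "'v set \<Rightarrow> 'e set \<Rightarrow> ('e \<Rightarrow> 'v) \<Rightarrow> ('e \<Rightarrow> 'v) \<Rightarrow> bool" where
  "labeled_graph V E s t \<longleftrightarrow> finite V \<and> finite E \<and> (\<forall>e\<in>E. s e \<in> V \<and> t e \<in> V)
     \<and> (\<forall>v\<in>V. (\<exists>e\<in>E. s e = v) \<and> (\<exists>e\<in>E. t e = v))"

definition edge_shift :: "'e set \<Rightarrow> ('e \<Rightarrow> 'v) \<Rightarrow> ('e \<Rightarrow> 'v) \<Rightarrow> (int \<Rightarrow> 'e) set" where
  "edge_shift E s t = {x. \<forall>i. x i \<in> E \<and> t (x i) = s (x (i + 1))}"

definition right_paths :: "'e set \<Rightarrow> ('e \<Rightarrow> 'v) \<Rightarrow> ('e \<Rightarrow> 'v) \<Rightarrow> (nat \<Rightarrow> 'e) set" where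
  "right_paths E s t = {x. \<forall>n. x n \<in> E \<and> t (x n) = s (x (Suc n))}"

definition right_resolving :: "'e set \<Rightarrow> ('e \<Rightarrow> 'v) \<Rightarrow> ('e \<Rightarrow> 'a) \<Rightarrow> bool" where
  "right_resolving E s L \<longleftrightarrow> (\<forall>e1\<in>E. \<forall>e2\<in>E. s e1 = s e2 \<and> e1 \<noteq> e2 \<longrightarrow> L e1 \<noteq> L e2)"

definition follower_set :: "'e set \<Rightarrow> ('e \<Rightarrow> 'v) \<Rightarrow> ('e \<Rightarrow> 'v) \<Rightarrow> ('e \<Rightarrow> 'a) \<Rightarrow> 'v \<Rightarrow> (nat \<Rightarrow> 'a) set" where
  "follower_set E s t L v = {L \<circ> x | x. x \<in> right_paths E s t \<and> s (x 0) = v}"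

definition right_half :: "(int \<Rightarrow> 'a) set \<Rightarrow> (nat \<Rightarrow> 'a) set" where
  "right_half Y = {(\<lambda>n. y (int n)) | y. y \<in> Y}"

definition glue :: "(int \<Rightarrow> 'a) \<Rightarrow> (nat \<Rightarrow> 'a) \<Rightarrow> (int \<Rightarrow> 'a)" where
  "glue y w = (\<lambda>i. if i < 0 then y i else w (nat i))"

definition future :: "(int \<Rightarrow> 'a) set \<Rightarrow> (int \<Rightarrow> 'a) \<Rightarrow> (nat \<Rightarrow> 'a) set" where
  "future Y y = {w \<in> right_half Y. glue y w \<in> Y}"

definition regular_vertex ::
  "(int \<Rightarrow> 'a) set \<Rightarrow> 'e set \<Rightarrow> ('e \<Rightarrow> 'v) \<Rightarrow> ('e \<Rightarrow> 'v) \<Rightarrow> ('e \<Rightarrow> 'a) \<Rightarrow> 'v \<Rightarrow> bool" where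
  "regular_vertex Y E s t L v \<longleftrightarrow>
     (\<exists>z\<in>edge_shift E s t. t (z (-1)) = v \<and> follower_set E s t L v = future Y (L \<circ> z))"

definition regular_graph ::
  "(int \<Rightarrow> 'a) set \<Rightarrow> 'v set \<Rightarrow> 'e set \<Rightarrow> ('e \<Rightarrow> 'v) \<Rightarrow> ('e \<Rightarrow> 'v) \<Rightarrow> ('e \<Rightarrow> 'a) \<Rightarrow> bool" where
  "regular_graph Y V E s t L \<longleftrightarrow> (\<forall>v\<in>V. regular_vertex Y E s t L v)"

definition follower_separated ::
  "'v set \<Rightarrow> 'e set \<Rightarrow> ('e \<Rightarrow> 'v) \<Rightarrow> ('e \<Rightarrow> 'v) \<Rightarrow> ('e \<Rightarrow> 'a) \<Rightarrow> bool" where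
  "follower_separated V E s t L \<longleftrightarrow>
     (\<forall>v\<in>V. \<forall>w\<in>V. follower_set E s t L v = follower_set E s t L w \<longrightarrow> v = w)"

definition U_set :: "(int \<Rightarrow> 'b) set \<Rightarrow> (int \<Rightarrow> 'b) \<Rightarrow> (int \<Rightarrow> 'b) set" where
  "U_set X x = {z \<in> X. \<exists>N. \<forall>i\<le>N. z i = x i}"

definition regular_points ::
  "(int \<Rightarrow> 'b) set \<Rightarrow> (int \<Rightarrow> 'c) set \<Rightarrow> ((int \<Rightarrow> 'b) \<Rightarrow> (int \<Rightarrow> 'c)) \<Rightarrow> (int \<Rightarrow> 'b) set" where
  "regular_points X Y \<pi> = {x \<in> X. \<pi> ` U_set X x = U_set Y (\<pi> x)}"

type_synonym 'a fc_vertex = "(nat \<Rightarrow> 'a) set"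
type_synonym 'a fc_edge = "'a fc_vertex \<times> 'a \<times> 'a fc_vertex"

definition shift_cons :: "'a \<Rightarrow> (nat \<Rightarrow> 'a) \<Rightarrow> (nat \<Rightarrow> 'a)" where
  "shift_cons a w = (\<lambda>n. if n = 0 then a else w (n - 1))"

definition fc_vertices :: "(int \<Rightarrow> 'a) set \<Rightarrow> 'a fc_vertex set" where
  "fc_vertices Y = {future Y y | y. y \<in> Y}"

definition fc_edges :: "(int \<Rightarrow> 'a) set \<Rightarrow> 'a fc_edge set" where
  "fc_edges Y = {(P, a, Q) | P a Q. P \<in> fc_vertices Y \<and> Q \<in> fc_vertices Y
                     \<and> Q = {w. shift_cons a w \<in> P}}"

definition fc_src :: "'a fc_edge \<Rightarrow> 'a fc_vertex" where
  "fc_src e = fst e"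

definition fc_tgt :: "'a fc_edge \<Rightarrow> 'a fc_vertex" where
  "fc_tgt e = snd (snd e)"

definition fc_label :: "'a fc_edge \<Rightarrow> 'a" where
  "fc_label e = fst (snd e)"

definition lg_hom ::
  "'v set \<Rightarrow> 'e set \<Rightarrow> ('e \<Rightarrow> 'v) \<Rightarrow> ('e \<Rightarrow> 'v) \<Rightarrow> ('e \<Rightarrow> 'a) \<Rightarrow>
   'w set \<Rightarrow> 'f set \<Rightarrow> ('f \<Rightarrow> 'w) \<Rightarrow> ('f \<Rightarrow> 'w) \<Rightarrow> ('f \<Rightarrow> 'a) \<Rightarrow>
   ('v \<Rightarrow> 'w) \<Rightarrow> ('e \<Rightarrow> 'f) \<Rightarrow> bool" where
  "lg_hom V E s t L V' E' s' t' L' hv he \<longleftrightarrow>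
     (\<forall>v\<in>V. hv v \<in> V') \<and>
     (\<forall>e\<in>E. he e \<in> E' \<and> s' (he e) = hv (s e) \<and> t' (he e) = hv (t e) \<and> L' (he e) = L e)"

definition hereditary :: "'f set \<Rightarrow> ('f \<Rightarrow> 'w) \<Rightarrow> ('f \<Rightarrow> 'w) \<Rightarrow> 'w set \<Rightarrow> bool" where
  "hereditary E s t U \<longleftrightarrow> (\<forall>e\<in>E. s e \<in> U \<longrightarrow> t e \<in> U)"

text \<open>Isomorphism onto the hereditary labeled subgraph on U: a homomorphism that is
  bijective on vertices onto U and on edges onto the edges with source in U
  (its inverse is then automatically a labeled-graph homomorphism).\<close>
definition lg_iso_onto_sub ::
  "'v set \<Rightarrow> 'e set \<Rightarrow> ('e \<Rightarrow> 'v) \<Rightarrow> ('e \<Rightarrow> 'v) \<Rightarrow> ('e \<Rightarrow> 'a) \<Rightarrow>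
   'w set \<Rightarrow> 'f set \<Rightarrow> ('f \<Rightarrow> 'w) \<Rightarrow> ('f \<Rightarrow> 'w) \<Rightarrow> ('f \<Rightarrow> 'a) \<Rightarrow> 'w set \<Rightarrow>
   ('v \<Rightarrow> 'w) \<Rightarrow> ('e \<Rightarrow> 'f) \<Rightarrow> bool" where
  "lg_iso_onto_sub V E s t L V' E' s' t' L' U hv he \<longleftrightarrow>
     U \<subseteq> V' \<and>
     lg_hom V E s t L U {e\<in>E'. s' e \<in> U} s' t' L' hv he \<and>
     bij_betw hv V U \<and> bij_betw he E {e\<in>E'. s' e \<in> U}"

end

theory Submission
  imports Defs
begin

text \<open>Send a vertex v to its follower set f(v) and an edge e to the future-cover edge
  (f(s e), L e, f(t e)). Regularity makes every f(v) a future, hence a vertex of the future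
  cover, and right-resolvingness gives f(t e) = {w. (L e) w \<in> f(s e)}, so edges go to edges.
  Conversely, since futures are nonempty, every future-cover edge leaving f(v) lifts to an edge
  leaving v. This lifting property alone makes the image hereditary, and, applied edge by edge
  to the right tail of a path that agrees with \<theta>(x) on a left ray, it shows that \<theta> maps U(x)
  onto U(\<theta>(x)); as labels are preserved, regular points go to regular points.
  Follower-separation makes the vertex map injective, and right-resolvingness then makes the
  edge map injective.\<close>

definition lifts_out_edges :: "'e set \<Rightarrow> ('e \<Rightarrow> 'v) \<Rightarrow> 'f set \<Rightarrow> ('f \<Rightarrow> 'w) \<Rightarrow>
    ('v \<Rightarrow> 'w) \<Rightarrow> ('e \<Rightarrow> 'f) \<Rightarrow> bool" where
  "lifts_out_edges E s E' s' hv he \<longleftrightarrow>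
     (\<forall>v. \<forall>f\<in>E'. s' f = hv v \<longrightarrow> (\<exists>e\<in>E. s e = v \<and> he e = f))"

definition splice_path :: "(int \<Rightarrow> 'e) \<Rightarrow> int \<Rightarrow> (nat \<Rightarrow> 'e) \<Rightarrow> int \<Rightarrow> 'e" where
  "splice_path x N g = (\<lambda>i. if i \<le> N then x i else g (nat (i - N - 1)))"

lemma splice_path_in_edge_shift:
  assumes "x \<in> edge_shift E s t" and "g \<in> right_paths E s t" and "s (g 0) = t (x N)"
  shows "splice_path x N g \<in> edge_shift E s t"
proof -
  have "t (splice_path x N g i) = s (splice_path x N g (i + 1))" for i
  proof -
    consider "i < N" | "i = N" | "i > N" by fastforce
    then show ?thesis
    proof cases
      case 3
      then have "nat (i + 1 - N - 1) = Suc (nat (i - N - 1))" by auto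
      then show ?thesis using 3 assms(2) by (simp add: splice_path_def right_paths_def)
    qed (use assms in \<open>auto simp: splice_path_def edge_shift_def\<close>)
  qed
  moreover have "splice_path x N g i \<in> E" for i
    using assms(1,2) by (simp add: splice_path_def edge_shift_def right_paths_def)
  ultimately show ?thesis by (simp add: edge_shift_def)
qed

lemma comp_splice_path: "f \<circ> splice_path x N g = splice_path (f \<circ> x) N (f \<circ> g)"
  by (auto simp: splice_path_def)

lemma splice_path_tail:
  assumes "\<forall>i\<le>N. z i = y i"
  shows "z = splice_path y N (\<lambda>k. z (N + 1 + int k))"
  using assms by (auto simp: splice_path_def)

lemma edge_shift_tail:
  "z \<in> edge_shift E s t \<Longrightarrow> (\<lambda>k. z (N + 1 + int k)) \<in> right_paths E s t"
  by (simp add: edge_shift_def right_paths_def add.assoc)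

lemma edge_shift_comp_hom:
  assumes "lg_hom V E s t L V' E' s' t' L' hv he" and "x \<in> edge_shift E s t"
  shows "he \<circ> x \<in> edge_shift E' s' t'"
  using assms by (simp add: lg_hom_def edge_shift_def)

lemma right_paths_lift:
  assumes hom: "lg_hom V E s t L V' E' s' t' L' hv he"
    and lifting: "lifts_out_edges E s E' s' hv he"
    and z: "z \<in> right_paths E' s' t'" and z0: "s' (z 0) = hv v"
  obtains g where "g \<in> right_paths E s t" "s (g 0) = v" "he \<circ> g = z"
proof -
  have lift: "\<exists>e\<in>E. s e = u \<and> he e = z n" if "s' (z n) = hv u" for u n
    using lifting z that unfolding lifts_out_edges_def right_paths_def by blast
  let ?P = "\<lambda>n e. e \<in> E \<and> he e = z n \<and> (n = 0 \<longrightarrow> s e = v)"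
  have "\<exists>e. ?P 0 e"
    using lift[OF z0] by auto
  moreover have "\<exists>e'. ?P (Suc n) e' \<and> t e = s e'" if "?P n e" for n e
  proof -
    have "s' (z (Suc n)) = t' (z n)"
      using z by (simp add: right_paths_def)
    also have "\<dots> = hv (t e)"
      using that hom by (auto simp: lg_hom_def)
    finally show ?thesis
      using lift by fastforce
  qed
  ultimately obtain g where "\<forall>n. ?P n (g n) \<and> t (g n) = s (g (Suc n))"
    using dependent_nat_choice[where P = ?P and Q = "\<lambda>_ e e'. t e = s e'"] by blast
  then show thesis
    by (intro that) (auto simp: right_paths_def)
qed

lemma image_U_set_edge_shift:
  assumes hom: "lg_hom V E s t L V' E' s' t' L' hv he"
    and lifting: "lifts_out_edges E s E' s' hv he"
    and x: "x \<in> edge_shift E s t"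
  shows "(\<lambda>x. he \<circ> x) ` U_set (edge_shift E s t) x = U_set (edge_shift E' s' t') (he \<circ> x)"
proof (intro set_eqI iffI)
  fix z assume "z \<in> (\<lambda>x. he \<circ> x) ` U_set (edge_shift E s t) x"
  then show "z \<in> U_set (edge_shift E' s' t') (he \<circ> x)"
    using edge_shift_comp_hom[OF hom] by (fastforce simp: U_set_def)
next
  fix z assume "z \<in> U_set (edge_shift E' s' t') (he \<circ> x)"
  then obtain N where z: "z \<in> edge_shift E' s' t'" and agree: "\<forall>i\<le>N. z i = he (x i)"
    by (auto simp: U_set_def)
  let ?tail = "\<lambda>k. z (N + 1 + int k)"
  have "s' (?tail 0) = t' (z N)"
    using z by (simp add: edge_shift_def)
  also have "\<dots> = t' (he (x N))"
    using agree by simp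
  also have "\<dots> = hv (t (x N))"
    using hom x by (simp add: edge_shift_def lg_hom_def)
  finally have "s' (?tail 0) = hv (t (x N))" .
  then obtain g where g: "g \<in> right_paths E s t" "s (g 0) = t (x N)" "he \<circ> g = ?tail"
    using right_paths_lift[OF hom lifting edge_shift_tail[OF z]] by blast
  have "splice_path x N g \<in> U_set (edge_shift E s t) x"
    using splice_path_in_edge_shift[OF x g(1,2)] by (auto simp: U_set_def splice_path_def)
  moreover have "he \<circ> splice_path x N g = z"
    using splice_path_tail[of N z "he \<circ> x"] agree g(3) by (simp add: comp_splice_path)
  ultimately show "z \<in> (\<lambda>x. he \<circ> x) ` U_set (edge_shift E s t) x" by blast
qed

lemma regular_points_image_hom:
  assumes hom: "lg_hom V E s t L V' E' s' t' L' hv he"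
    and lifting: "lifts_out_edges E s E' s' hv he"
  shows "(\<lambda>x. he \<circ> x) ` regular_points (edge_shift E s t) Y (\<lambda>x. L \<circ> x)
    \<subseteq> regular_points (edge_shift E' s' t') Y (\<lambda>x. L' \<circ> x)"
proof
  fix z assume "z \<in> (\<lambda>x. he \<circ> x) ` regular_points (edge_shift E s t) Y (\<lambda>x. L \<circ> x)"
  then obtain x where z: "z = he \<circ> x" and x: "x \<in> edge_shift E s t"
    and reg: "(\<lambda>x. L \<circ> x) ` U_set (edge_shift E s t) x = U_set Y (L \<circ> x)"
    by (auto simp: regular_points_def)
  have labels: "L' \<circ> (he \<circ> x') = L \<circ> x'" if "x' \<in> edge_shift E s t" for x'
    using hom that by (auto simp: lg_hom_def edge_shift_def)
  have "(\<lambda>x. L' \<circ> x) ` U_set (edge_shift E' s' t') z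
      = (\<lambda>x'. L' \<circ> (he \<circ> x')) ` U_set (edge_shift E s t) x"
    by (simp add: z image_U_set_edge_shift[OF hom lifting x, symmetric] image_image)
  also have "\<dots> = (\<lambda>x. L \<circ> x) ` U_set (edge_shift E s t) x"
    by (rule image_cong) (simp_all add: labels U_set_def)
  finally show "z \<in> regular_points (edge_shift E' s' t') Y (\<lambda>x. L' \<circ> x)"
    using reg labels[OF x] edge_shift_comp_hom[OF hom x] by (simp add: z regular_points_def)
qed

lemma hereditary_image_lifts_out_edges:
  assumes hom: "lg_hom V E s t L V' E' s' t' L' hv he"
    and lifting: "lifts_out_edges E s E' s' hv he"
    and graph: "labeled_graph V E s t"
  shows "hereditary E' s' t' (hv ` V)"
  unfolding hereditary_def
proof (intro ballI impI)
  fix f assume "f \<in> E'" and "s' f \<in> hv ` V"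
  then obtain e where "e \<in> E" "he e = f"
    using lifting by (auto simp: lifts_out_edges_def)
  then show "t' f \<in> hv ` V"
    using hom graph by (auto simp: lg_hom_def labeled_graph_def)
qed

lemma lg_iso_onto_sub_lifts_out_edges:
  assumes hom: "lg_hom V E s t L V' E' s' t' L' hv he"
    and lifting: "lifts_out_edges E s E' s' hv he"
    and graph: "labeled_graph V E s t"
    and rr: "right_resolving E s L"
    and inj: "inj_on hv V"
  shows "lg_iso_onto_sub V E s t L V' E' s' t' L' (hv ` V) hv he"
proof -
  have ends: "s e \<in> V" "t e \<in> V" if "e \<in> E" for e
    using graph that by (auto simp: labeled_graph_def)
  have "inj_on he E"
  proof (rule inj_onI)
    fix e1 e2 assume e: "e1 \<in> E" "e2 \<in> E" "he e1 = he e2"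
    then have "hv (s e1) = hv (s e2)" and "L e1 = L e2"
      using hom by (metis lg_hom_def)+
    then show "e1 = e2"
      using e ends inj rr by (metis inj_on_def right_resolving_def)
  qed
  moreover have "he ` E = {f \<in> E'. s' f \<in> hv ` V}"
    using hom lifting ends by (fastforce simp: lg_hom_def lifts_out_edges_def)
  ultimately show ?thesis
    using hom inj ends by (auto simp: lg_iso_onto_sub_def lg_hom_def bij_betw_def)
qed

definition follower_edge :: "'e set \<Rightarrow> ('e \<Rightarrow> 'v) \<Rightarrow> ('e \<Rightarrow> 'v) \<Rightarrow> ('e \<Rightarrow> 'a) \<Rightarrow> 'e \<Rightarrow> 'a fc_edge"
  where "follower_edge E s t L e = (follower_set E s t L (s e), L e, follower_set E s t L (t e))"

lemma shift_cons_in_right_paths: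
  assumes "x \<in> right_paths E s t" and "e \<in> E" and "t e = s (x 0)"
  shows "shift_cons e x \<in> right_paths E s t"
  using assms by (auto simp: right_paths_def shift_cons_def split: nat.split)

lemma right_paths_tl: "x \<in> right_paths E s t \<Longrightarrow> x \<circ> Suc \<in> right_paths E s t"
  by (simp add: right_paths_def)

lemma follower_set_target:
  assumes rr: "right_resolving E s L" and e: "e \<in> E"
  shows "follower_set E s t L (t e) = {w. shift_cons (L e) w \<in> follower_set E s t L (s e)}"
proof (intro set_eqI iffI)
  fix w assume "w \<in> follower_set E s t L (t e)"
  then obtain x where x: "w = L \<circ> x" "x \<in> right_paths E s t" "s (x 0) = t e"
    by (auto simp: follower_set_def)
  have "shift_cons e x \<in> right_paths E s t"
    using shift_cons_in_right_paths[OF x(2) e] x(3) by simp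
  moreover have "L \<circ> shift_cons e x = shift_cons (L e) w"
    using x(1) by (auto simp: shift_cons_def)
  moreover have "s (shift_cons e x 0) = s e"
    by (simp add: shift_cons_def)
  ultimately show "w \<in> {w. shift_cons (L e) w \<in> follower_set E s t L (s e)}"
    unfolding follower_set_def by (metis (mono_tags, lifting) mem_Collect_eq)
next
  fix w assume "w \<in> {w. shift_cons (L e) w \<in> follower_set E s t L (s e)}"
  then obtain x where x: "shift_cons (L e) w = L \<circ> x" "x \<in> right_paths E s t" "s (x 0) = s e"
    by (auto simp: follower_set_def)
  have "L (x 0) = L e"
    using fun_cong[OF x(1), of 0] by (simp add: shift_cons_def)
  then have "x 0 = e"
    using rr e x(2,3) by (auto simp: right_resolving_def right_paths_def)
  moreover have "L \<circ> (x \<circ> Suc) = w"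
  proof
    fix n show "(L \<circ> (x \<circ> Suc)) n = w n"
      using fun_cong[OF x(1), of "Suc n"] by (simp add: shift_cons_def)
  qed
  ultimately show "w \<in> follower_set E s t L (t e)"
    using right_paths_tl[OF x(2)] x(2) unfolding follower_set_def right_paths_def by force
qed

lemma right_half_in_future:
  assumes "y \<in> Y"
  shows "(\<lambda>n. y (int n)) \<in> future Y y"
proof -
  have "glue y (\<lambda>n. y (int n)) = y"
    by (auto simp: glue_def)
  then show ?thesis
    using assms by (auto simp: future_def right_half_def)
qed

lemma follower_set_in_fc_vertices:
  assumes "regular_vertex Y E s t L v" and "(\<lambda>x. L \<circ> x) ` edge_shift E s t \<subseteq> Y"
  shows "follower_set E s t L v \<in> fc_vertices Y"
  using assms by (auto simp: regular_vertex_def fc_vertices_def)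

lemma lg_hom_follower:
  assumes graph: "labeled_graph V E s t"
    and presents: "Y = (\<lambda>x. L \<circ> x) ` edge_shift E s t"
    and rr: "right_resolving E s L"
    and reg: "regular_graph Y V E s t L"
  shows "lg_hom V E s t L (fc_vertices Y) (fc_edges Y) fc_src fc_tgt fc_label
    (follower_set E s t L) (follower_edge E s t L)"
proof -
  have vertex: "follower_set E s t L v \<in> fc_vertices Y" if "v \<in> V" for v
    using follower_set_in_fc_vertices[of Y E s t L v] reg presents that
    by (simp add: regular_graph_def)
  have "follower_edge E s t L e \<in> fc_edges Y" if "e \<in> E" for e
  proof -
    have "s e \<in> V" "t e \<in> V"
      using graph that by (auto simp: labeled_graph_def)
    then show ?thesis
      using vertex follower_set_target[where t = t, OF rr that]
      unfolding fc_edges_def follower_edge_def by blast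
  qed
  then show ?thesis
    using vertex by (simp add: lg_hom_def follower_edge_def fc_src_def fc_tgt_def fc_label_def)
qed

lemma lifts_out_edges_follower:
  assumes rr: "right_resolving E s L"
  shows "lifts_out_edges E s (fc_edges Y) fc_src (follower_set E s t L) (follower_edge E s t L)"
  unfolding lifts_out_edges_def
proof (intro allI ballI impI)
  fix v f assume f: "f \<in> fc_edges Y" and src: "fc_src f = follower_set E s t L v"
  then obtain a Q y where f': "f = (follower_set E s t L v, a, Q)"
    "Q = {w. shift_cons a w \<in> follower_set E s t L v}" "y \<in> Y" "Q = future Y y"
    by (auto simp: fc_edges_def fc_vertices_def fc_src_def)
  then have "shift_cons a (\<lambda>n. y (int n)) \<in> follower_set E s t L v"
    using right_half_in_future by blast
  then obtain x where x: "shift_cons a (\<lambda>n. y (int n)) = L \<circ> x"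
    "x \<in> right_paths E s t" "s (x 0) = v"
    by (auto simp: follower_set_def)
  have "x 0 \<in> E" and "L (x 0) = a"
    using x(2) fun_cong[OF x(1), of 0] by (auto simp: right_paths_def shift_cons_def)
  then show "\<exists>e\<in>E. s e = v \<and> follower_edge E s t L e = f"
    using follower_set_target[OF rr] f' x(3) by (auto simp: follower_edge_def)
qed

theorem proposition3p1:
  fixes V :: "'v set" and E :: "'e set" and s t :: "'e \<Rightarrow> 'v" and L :: "'e \<Rightarrow> 'a"
    and Y :: "(int \<Rightarrow> 'a) set"
  assumes graph: "labeled_graph V E s t"
    and presents: "Y = (\<lambda>x. L \<circ> x) ` edge_shift E s t"
    and rr: "right_resolving E s L"
    and reg: "regular_graph Y V E s t L"
  shows "\<exists>(hv :: 'v \<Rightarrow> 'a fc_vertex) (he :: 'e \<Rightarrow> 'a fc_edge).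
     lg_hom V E s t L (fc_vertices Y) (fc_edges Y) fc_src fc_tgt fc_label hv he
   \<and> (\<lambda>x. he \<circ> x) ` regular_points (edge_shift E s t) Y (\<lambda>x. L \<circ> x)
       \<subseteq> regular_points (edge_shift (fc_edges Y) fc_src fc_tgt) Y (\<lambda>x. fc_label \<circ> x)
   \<and> hereditary (fc_edges Y) fc_src fc_tgt (hv ` V)
   \<and> (follower_separated V E s t L \<longrightarrow>
        lg_iso_onto_sub V E s t L (fc_vertices Y) (fc_edges Y) fc_src fc_tgt fc_label (hv ` V) hv he)"
proof (intro exI conjI impI)
  let ?hv = "follower_set E s t L" and ?he = "follower_edge E s t L"
  show hom: "lg_hom V E s t L (fc_vertices Y) (fc_edges Y) fc_src fc_tgt fc_label ?hv ?he"
    using graph presents rr reg by (rule lg_hom_follower)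
  have lifting: "lifts_out_edges E s (fc_edges Y) fc_src ?hv ?he"
    using rr by (rule lifts_out_edges_follower)
  show "(\<lambda>x. ?he \<circ> x) ` regular_points (edge_shift E s t) Y (\<lambda>x. L \<circ> x)
      \<subseteq> regular_points (edge_shift (fc_edges Y) fc_src fc_tgt) Y (\<lambda>x. fc_label \<circ> x)"
    using hom lifting by (rule regular_points_image_hom)
  show "hereditary (fc_edges Y) fc_src fc_tgt (?hv ` V)"
    using hom lifting graph by (rule hereditary_image_lifts_out_edges)
  assume "follower_separated V E s t L"
  then have "inj_on ?hv V"
    by (auto simp: follower_separated_def inj_on_def)
  with hom lifting graph rr
  show "lg_iso_onto_sub V E s t L (fc_vertices Y) (fc_edges Y) fc_src fc_tgt fc_label
      (?hv ` V) ?hv ?he"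
    by (rule lg_iso_onto_sub_lifts_out_edges)
qed

end
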